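(* Suppose there exist $i, d \ge 2$ such that $o(\alpha_d) + a_i \ge c_R$, $o(\alpha_d) < \infty$, and $o(\alpha_d) \le o(\alpha_i) \le \infty$. Then $R = k[[\widetilde{x}_1, \ldots, \widetilde{x}_n]]$ where $\widetilde{x}_j = x_j$ for $j \ne i$ and $\widetilde{x}_i = t^{a_i}$, and $\widetilde{x}_1,\ldots,\widetilde{x}_n$ are again Herzog–Kunz generators of $R$.
   Context: Let $k$ be an algebraically closed field of characteristic $0$ and let $(R,\mathfrak m)$ be a complete local noetherian domain of dimension $1$ containing $k$ with $R/\mathfrak m = k$; its normalization is $\overline R = k[[t]]$, $R \subseteq k[[t]]$ finite birational. Let $v$ be the $t$-adic valuation; for $A \subseteq k((t))$ let $v(A) = \{v(f): f\in A\setminus\{0\}\}$. The conductor is $\mathfrak C_R = \{x\in\overline R : x\overline R\subseteq R\} = t^{c_R}\overline R$, $c_R$ the conductor degree. The Herzog–Kunz sequence of $R$ is $v(\mathfrak m)\setminus v(\mathfrak m^2)$ listed increasingly as $a_1<\cdots<a_n$; Herzog–Kunz generators are $x_i \in R$ with $v(x_i)=a_i$ (these satisfy $R = k[[x_1,\ldots,x_n]]$). Fix Herzog–Kunz generators $x_1, \ldots, x_n$ with $x_1 = t^{a_1}$ and, for $i \ge 2$, $x_i = \alpha_i t^{a_i}$ with $\alpha_i \in k[[t]]$ a unit of constant term $1$. Define $o(\alpha_i) = v(\alpha_i - 1)$ (so $o(\alpha_i) = \infty$ if $\alpha_i = 1$). *)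

theory Defs
  imports "HOL-Computational_Algebra.Computational_Algebra" "HOL-Library.Extended_Nat"
begin

text \<open>k[[t]] is modelled as the type of formal power series over a field k;
 t = fps_X, the t-adic valuation of a nonzero f is subdegree f.\<close>

definition alg_closed_field :: "'a::field itself \<Rightarrow> bool" where
  "alg_closed_field _ \<longleftrightarrow> (\<forall>p::'a poly. degree p \<ge> 1 \<longrightarrow> (\<exists>z. poly p z = 0))"

definition k_subalg :: "'a::field fps set \<Rightarrow> bool" where
  "k_subalg S \<longleftrightarrow> (\<forall>c. fps_const c \<in> S) \<and> (\<forall>f\<in>S. \<forall>g\<in>S. f + g \<in> S \<and> f * g \<in> S)"

definition tadic_closed :: "'a::field fps set \<Rightarrow> bool" where
  "tadic_closed S \<longleftrightarrow> (\<forall>f. (\<forall>N. \<exists>g\<in>S. \<forall>j<N. f $ j = g $ j) \<longrightarrow> f \<in> S)"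

text \<open>k[[x_1,...,x_n]]: the smallest closed k-subalgebra of k[[t]] containing the x_i\<close>
definition gen_alg :: "'a::field fps set \<Rightarrow> 'a fps set" where
  "gen_alg X = \<Inter>{S. k_subalg S \<and> tadic_closed S \<and> X \<subseteq> S}"

definition conductor_exps :: "'a::field fps set \<Rightarrow> nat set" where
  "conductor_exps R = {c. \<forall>f. (\<forall>j<c. f $ j = 0) \<longrightarrow> f \<in> R}"

definition cond_deg :: "'a::field fps set \<Rightarrow> nat" where
  "cond_deg R = (LEAST c. c \<in> conductor_exps R)"

text \<open>Standing setup: R a k-subalgebra of k[[t]] of dimension 1 (R \<noteq> k) with
 k[[t]] finite birational over R, i.e. nonzero conductor.\<close>
definition curve_ring :: "'a::field fps set \<Rightarrow> bool" where
  "curve_ring R \<longleftrightarrow> k_subalg R \<and> tadic_closed R \<and> conductor_exps R \<noteq> {}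
      \<and> R \<noteq> range fps_const"

definition max_ideal :: "'a::field fps set \<Rightarrow> 'a fps set" where
  "max_ideal R = {f \<in> R. f $ 0 = 0}"

definition ideal_sq :: "'a::field fps set \<Rightarrow> 'a fps set" where
  "ideal_sq M = {f. \<exists>ps. set ps \<subseteq> M \<times> M \<and> f = sum_list (map (\<lambda>(a,b). a * b) ps)}"

definition vals :: "'a::field fps set \<Rightarrow> nat set" where
  "vals A = subdegree ` (A - {0})"

definition HK_set :: "'a::field fps set \<Rightarrow> nat set" where
  "HK_set R = vals (max_ideal R) - vals (ideal_sq (max_ideal R))"

text \<open>a_j (1-based): j-th element of the Herzog-Kunz sequence\<close>
definition hk :: "'a::field fps set \<Rightarrow> nat \<Rightarrow> nat" where
  "hk R j = sorted_list_of_set (HK_set R) ! (j - 1)"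

definition HK_gens :: "'a::field fps set \<Rightarrow> nat \<Rightarrow> (nat \<Rightarrow> 'a fps) \<Rightarrow> bool" where
  "HK_gens R n x \<longleftrightarrow> n = card (HK_set R) \<and>
     (\<forall>j\<in>{1..n}. x j \<in> R \<and> x j \<noteq> 0 \<and> subdegree (x j) = hk R j)"

definition ordm1 :: "'a::field fps \<Rightarrow> enat" where
  "ordm1 \<alpha> = (if \<alpha> = 1 then \<infinity> else enat (subdegree (\<alpha> - 1)))"

end

theory Submission imports Defs begin

text \<open>
  Since \<open>x\<^sub>i - t\<^bsup>a\<^sub>i\<^esup> = (\<alpha>\<^sub>i - 1) t\<^bsup>a\<^sub>i\<^esup>\<close> has valuation at least
  \<open>o(\<alpha>\<^sub>i) + a\<^sub>i \<ge> o(\<alpha>\<^sub>d) + a\<^sub>i \<ge> c\<^sub>R\<close>, it lies in the conductor, so \<open>t\<^bsup>a\<^sub>i\<^esup> \<in> R\<close>;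
  having the same valuation as \<open>x\<^sub>i\<close>, it may replace \<open>x\<^sub>i\<close> in a family of Herzog-Kunz
  generators. It remains to see that any Herzog-Kunz generators \<open>y\<^sub>j\<close> generate \<open>R\<close>.
  This is a Nakayama-type argument: by descending induction on the valuation, which can be
  bounded because high powers of \<open>t\<close> lie in \<open>m\<^sup>2\<close>, every element of \<open>m\<close> is a
  linear combination of the \<open>y\<^sub>j\<close> modulo \<open>m\<^sup>2\<close>; iterating this approximates every
  element of \<open>R\<close> \<open>t\<close>-adically by polynomials in the \<open>y\<^sub>j\<close>.
\<close>

lemma k_subalg_const: "k_subalg S \<Longrightarrow> fps_const c \<in> S"
  by (simp add: k_subalg_def)

lemma k_subalg_add: "k_subalg S \<Longrightarrow> f \<in> S \<Longrightarrow> g \<in> S \<Longrightarrow> f + g \<in> S"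
  by (simp add: k_subalg_def)

lemma k_subalg_mult: "k_subalg S \<Longrightarrow> f \<in> S \<Longrightarrow> g \<in> S \<Longrightarrow> f * g \<in> S"
  by (simp add: k_subalg_def)

lemma k_subalg_zero: "k_subalg S \<Longrightarrow> (0::'a::field fps) \<in> S"
  using k_subalg_const[of S 0] by simp

lemma k_subalg_smult: "k_subalg S \<Longrightarrow> f \<in> S \<Longrightarrow> fps_const c * f \<in> S"
  using k_subalg_const k_subalg_mult by blast

lemma k_subalg_diff:
  assumes "k_subalg S" "f \<in> S" "g \<in> S"
  shows "f - g \<in> S"
proof -
  have "f + fps_const (-1) * g \<in> S"
    using assms k_subalg_add k_subalg_smult by blast
  then show ?thesis by (simp add: fps_const_neg[symmetric] del: fps_const_neg)
qed

lemma gen_alg_k_subalg: "k_subalg (gen_alg X)"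
  unfolding k_subalg_def gen_alg_def by auto

lemma gen_alg_superset: "X \<subseteq> gen_alg X"
  unfolding gen_alg_def by auto

lemma gen_alg_least: "k_subalg S \<Longrightarrow> tadic_closed S \<Longrightarrow> X \<subseteq> S \<Longrightarrow> gen_alg X \<subseteq> S"
  unfolding gen_alg_def by auto

lemma gen_alg_tadic_closed: "tadic_closed (gen_alg X)"
  unfolding tadic_closed_def
proof (intro allI impI)
  fix f assume approx: "\<forall>N. \<exists>g\<in>gen_alg X. \<forall>j<N. f $ j = g $ j"
  show "f \<in> gen_alg X" unfolding gen_alg_def
  proof
    fix T assume T: "T \<in> {S. k_subalg S \<and> tadic_closed S \<and> X \<subseteq> S}"
    then have "gen_alg X \<subseteq> T" by (simp add: gen_alg_least)
    then show "f \<in> T" using approx T unfolding tadic_closed_def by blast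
  qed
qed

lemma max_ideal_add: "k_subalg R \<Longrightarrow> a \<in> max_ideal R \<Longrightarrow> b \<in> max_ideal R \<Longrightarrow> a + b \<in> max_ideal R"
  unfolding max_ideal_def using k_subalg_add by auto

lemma max_ideal_diff: "k_subalg R \<Longrightarrow> a \<in> max_ideal R \<Longrightarrow> b \<in> max_ideal R \<Longrightarrow> a - b \<in> max_ideal R"
  unfolding max_ideal_def using k_subalg_diff by auto

lemma max_ideal_mult: "k_subalg R \<Longrightarrow> a \<in> max_ideal R \<Longrightarrow> b \<in> max_ideal R \<Longrightarrow> a * b \<in> max_ideal R"
  unfolding max_ideal_def using k_subalg_mult by auto

lemma max_ideal_smult: "k_subalg R \<Longrightarrow> a \<in> max_ideal R \<Longrightarrow> fps_const c * a \<in> max_ideal R"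
  unfolding max_ideal_def using k_subalg_smult by auto

lemma vals_max_ideal_pos: "v \<in> vals (max_ideal R) \<Longrightarrow> 0 < v"
  unfolding vals_def max_ideal_def by (auto simp: subdegree_eq_0_iff)

lemma ideal_sq_zero: "0 \<in> ideal_sq M"
  unfolding ideal_sq_def by (auto intro: exI[of _ "[]"])

lemma ideal_sq_add_mult:
  assumes "a \<in> M" "b \<in> M" "g \<in> ideal_sq M"
  shows "a * b + g \<in> ideal_sq M"
proof -
  obtain ps where "set ps \<subseteq> M \<times> M" "g = sum_list (map (\<lambda>(a, b). a * b) ps)"
    using assms(3) unfolding ideal_sq_def by blast
  then show ?thesis
    using assms(1,2) unfolding ideal_sq_def by (auto intro!: exI[of _ "(a, b) # ps"])
qed

lemma ideal_sq_mult: "a \<in> M \<Longrightarrow> b \<in> M \<Longrightarrow> a * b \<in> ideal_sq M"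
  using ideal_sq_add_mult[OF _ _ ideal_sq_zero] by fastforce

lemma ideal_sq_induct [consumes 1, case_names zero add_mult]:
  assumes "f \<in> ideal_sq M"
    and "P 0"
    and "\<And>a b g. a \<in> M \<Longrightarrow> b \<in> M \<Longrightarrow> g \<in> ideal_sq M \<Longrightarrow> P g \<Longrightarrow> P (a * b + g)"
  shows "P f"
proof -
  obtain ps where ps: "set ps \<subseteq> M \<times> M" "f = sum_list (map (\<lambda>(a, b). a * b) ps)"
    using assms(1) unfolding ideal_sq_def by blast
  have "sum_list (map (\<lambda>(a, b). a * b) ps) \<in> ideal_sq M \<and> P (sum_list (map (\<lambda>(a, b). a * b) ps))"
    using ps(1)
  proof (induction ps)
    case Nil
    then show ?case using assms(2) ideal_sq_zero by simp
  next
    case (Cons p ps)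
    then show ?case using assms(3) ideal_sq_add_mult by (cases p) auto
  qed
  then show ?thesis using ps(2) by simp
qed

lemma ideal_sq_add: "f \<in> ideal_sq M \<Longrightarrow> g \<in> ideal_sq M \<Longrightarrow> f + g \<in> ideal_sq M"
  by (induction f rule: ideal_sq_induct) (auto simp: add.assoc intro: ideal_sq_add_mult)

lemma ideal_sq_smult:
  assumes "\<And>a. a \<in> M \<Longrightarrow> fps_const c * a \<in> M" "f \<in> ideal_sq M"
  shows "fps_const c * f \<in> ideal_sq M"
  using assms(2)
proof (induction f rule: ideal_sq_induct)
  case zero
  then show ?case by (simp add: ideal_sq_zero)
next
  case (add_mult a b g)
  have "fps_const c * (a * b + g) = (fps_const c * a) * b + fps_const c * g"
    by (simp add: algebra_simps)
  then show ?case using add_mult assms(1) ideal_sq_add_mult by metis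
qed

lemma ideal_sq_max_ideal_subset:
  assumes "k_subalg R"
  shows "ideal_sq (max_ideal R) \<subseteq> max_ideal R"
proof
  fix f assume "f \<in> ideal_sq (max_ideal R)"
  then show "f \<in> max_ideal R"
  proof (induction f rule: ideal_sq_induct)
    case zero
    then show ?case by (simp add: max_ideal_def k_subalg_zero[OF assms])
  next
    case (add_mult a b g)
    then show ?case by (simp add: max_ideal_add[OF assms] max_ideal_mult[OF assms])
  qed
qed

lemma cond_deg_mem: "conductor_exps R \<noteq> {} \<Longrightarrow> cond_deg R \<in> conductor_exps R"
  unfolding cond_deg_def by (metis LeastI ex_in_conv)

lemma mem_if_vanishes_below_cond_deg:
  "conductor_exps R \<noteq> {} \<Longrightarrow> \<forall>j<cond_deg R. f $ j = 0 \<Longrightarrow> f \<in> R"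
  using cond_deg_mem unfolding conductor_exps_def by blast

lemma mem_max_ideal_if_vanishes_below:
  assumes "conductor_exps R \<noteq> {}" "\<forall>j<Suc (cond_deg R). f $ j = 0"
  shows "f \<in> max_ideal R"
  using assms mem_if_vanishes_below_cond_deg[OF assms(1)] unfolding max_ideal_def by simp

lemma mem_ideal_sq_if_vanishes_below:
  fixes f :: "'a::field fps"
  assumes "conductor_exps R \<noteq> {}" "\<forall>j<2 * Suc (cond_deg R). f $ j = 0"
  shows "f \<in> ideal_sq (max_ideal R)"
proof -
  define c where "c = Suc (cond_deg R)"
  have "\<forall>j<c. f $ j = 0"
    using assms(2) unfolding c_def by simp
  then have "f = fps_shift c f * fps_X ^ c"
    by (intro fps_ext) (simp add: fps_X_power_mult_right_nth)
  moreover have "fps_shift c f \<in> max_ideal R"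
    using assms by (intro mem_max_ideal_if_vanishes_below) (auto simp: c_def)
  moreover have "fps_X ^ c \<in> max_ideal R"
    using assms(1) unfolding c_def by (intro mem_max_ideal_if_vanishes_below) auto
  ultimately show ?thesis by (metis ideal_sq_mult)
qed

lemma finite_HK_set:
  assumes "conductor_exps R \<noteq> {}"
  shows "finite (HK_set R)"
proof -
  have "v < 2 * Suc (cond_deg R)" if "v \<in> HK_set R" for v
  proof (rule ccontr)
    assume "\<not> ?thesis"
    then have "fps_X ^ v \<in> ideal_sq (max_ideal R)"
      using assms by (intro mem_ideal_sq_if_vanishes_below) auto
    then have "v \<in> vals (ideal_sq (max_ideal R))"
      unfolding vals_def by (intro image_eqI[of _ _ "fps_X ^ v"]) (auto simp: fps_X_power_subdegree)
    then show False using that unfolding HK_set_def by blast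
  qed
  then show ?thesis by (meson finite_lessThan finite_subset lessThan_iff subsetI)
qed

lemma HK_set_eq_image_hk:
  assumes "conductor_exps R \<noteq> {}" "n = card (HK_set R)"
  shows "HK_set R = hk R ` {1..n}"
proof -
  let ?l = "sorted_list_of_set (HK_set R)"
  have "set ?l = HK_set R" "length ?l = n"
    using finite_HK_set[OF assms(1)] assms(2) by simp_all
  then have "HK_set R = {?l ! p | p. p < n}"
    by (metis set_conv_nth)
  also have "\<dots> = (\<lambda>p. ?l ! p) ` {..<n}"
    by auto
  also have "\<dots> = hk R ` {1..n}"
    unfolding hk_def image_Suc_lessThan[symmetric] image_image by simp
  finally show ?thesis .
qed

lemma HK_gens_mem_max_ideal:
  assumes "curve_ring R" "HK_gens R n y" "j \<in> {1..n}"
  shows "y j \<in> max_ideal R"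
proof -
  have "HK_set R = hk R ` {1..n}"
    using assms(1,2) unfolding curve_ring_def HK_gens_def by (intro HK_set_eq_image_hk) auto
  then have "hk R j \<in> vals (max_ideal R)"
    using assms(3) unfolding HK_set_def by blast
  then have "0 < subdegree (y j)"
    using assms(2,3) vals_max_ideal_pos unfolding HK_gens_def by auto
  then show ?thesis
    using assms(2,3) unfolding HK_gens_def max_ideal_def by (auto intro: nth_less_subdegree_zero)
qed

lemma cancel_leading_coeff:
  fixes f h :: "'a::field fps"
  assumes f: "\<forall>j<s. f $ j = 0" and h: "h \<noteq> 0" "subdegree h = s"
  shows "\<forall>j<Suc s. (f - fps_const (f $ s / h $ s) * h) $ j = 0"
proof (intro allI impI)
  fix j assume "j < Suc s"
  then consider "j < s" | "j = s" by linarith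
  then show "(f - fps_const (f $ s / h $ s) * h) $ j = 0"
  proof cases
    case 1
    then have "f $ j = 0" "h $ j = 0"
      using f h(2) nth_less_subdegree_zero by auto
    then show ?thesis by simp
  next
    case 2
    have "h $ s \<noteq> 0" using h nth_subdegree_nonzero by blast
    then show ?thesis using 2 by simp
  qed
qed

lemma fps_mult_vanishes_below_Suc:
  fixes u v :: "'a::semiring_0 fps"
  assumes u: "\<forall>j<N. u $ j = 0" and v: "v $ 0 = 0"
  shows "\<forall>j<Suc N. (u * v) $ j = 0"
proof (intro allI impI)
  fix j assume j: "j < Suc N"
  have "u $ i * v $ (j - i) = 0" if "i \<in> {0..j}" for i
  proof (cases "i < N")
    case False
    then have "i = j" using that j by auto
    then show ?thesis using v by simp
  qed (use u in simp)
  then show "(u * v) $ j = 0" by (simp add: fps_mult_nth)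
qed

lemma ideal_sq_approx:
  fixes M S :: "'a::field fps set"
  assumes subalg: "k_subalg S" and M0: "\<forall>a\<in>M. a $ 0 = 0"
    and approx: "\<forall>a\<in>M. \<exists>g\<in>S. \<forall>j<Suc N. (a - g) $ j = 0"
    and "q \<in> ideal_sq M"
  shows "\<exists>g\<in>S. \<forall>j<Suc (Suc N). (q - g) $ j = 0"
  using assms(4)
proof (induction q rule: ideal_sq_induct)
  case zero
  show ?case using k_subalg_zero[OF subalg] by (intro bexI[of _ 0]) simp_all
next
  case (add_mult a b q)
  obtain g where g: "g \<in> S" "\<forall>j<Suc (Suc N). (q - g) $ j = 0"
    using add_mult.IH by blast
  obtain ga where ga: "ga \<in> S" "\<forall>j<Suc N. (a - ga) $ j = 0"
    using approx add_mult.hyps(1) by blast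
  obtain gb where gb: "gb \<in> S" "\<forall>j<Suc N. (b - gb) $ j = 0"
    using approx add_mult.hyps(2) by blast
  \<comment> \<open>\<open>ab - g\<^sub>ag\<^sub>b = (a - g\<^sub>a)b + (b - g\<^sub>b)g\<^sub>a\<close>, and each summand gains one order from a factor in \<open>m\<close>.\<close>
  have "(a - ga) $ 0 = 0" "a $ 0 = 0"
    using ga(2) M0 add_mult.hyps(1) by auto
  then have "ga $ 0 = 0" by simp
  then have "\<forall>j<Suc (Suc N). ((b - gb) * ga) $ j = 0"
    by (rule fps_mult_vanishes_below_Suc[OF gb(2)])
  moreover have "\<forall>j<Suc (Suc N). ((a - ga) * b) $ j = 0"
    using M0 add_mult.hyps(2) by (intro fps_mult_vanishes_below_Suc[OF ga(2)]) blast
  ultimately have "\<forall>j<Suc (Suc N). ((a - ga) * b + (b - gb) * ga + (q - g)) $ j = 0"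
    using g(2) by simp
  moreover have "(a - ga) * b + (b - gb) * ga + (q - g) = a * b + q - (ga * gb + g)"
    by (simp add: algebra_simps)
  moreover have "ga * gb + g \<in> S"
    using ga(1) gb(1) g(1) by (intro k_subalg_add k_subalg_mult subalg)
  ultimately show ?case by metis
qed

context
  fixes R S :: "'a::field fps set" and n :: nat and y :: "nat \<Rightarrow> 'a fps"
  assumes curve: "curve_ring R" and gens: "HK_gens R n y"
    and subalg: "k_subalg S" and gens_in: "\<forall>j\<in>{1..n}. y j \<in> S"
begin

lemma exists_mod_ideal_sq_of_val:
  assumes "s \<in> vals (max_ideal R)"
  shows "\<exists>h\<in>max_ideal R. h \<noteq> 0 \<and> subdegree h = s \<and> (\<exists>g\<in>S. h - g \<in> ideal_sq (max_ideal R))"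
proof (cases "s \<in> vals (ideal_sq (max_ideal R))")
  case True
  then obtain h where h: "h \<in> ideal_sq (max_ideal R)" "h \<noteq> 0" "subdegree h = s"
    unfolding vals_def by auto
  then have "h \<in> max_ideal R"
    using curve ideal_sq_max_ideal_subset unfolding curve_ring_def by blast
  moreover have "h - 0 \<in> ideal_sq (max_ideal R)" "0 \<in> S"
    using h(1) k_subalg_zero[OF subalg] by simp_all
  ultimately show ?thesis using h(2,3) by blast
next
  case False
  then have "s \<in> HK_set R" using assms unfolding HK_set_def by blast
  moreover have "HK_set R = hk R ` {1..n}"
    using curve gens unfolding curve_ring_def HK_gens_def by (intro HK_set_eq_image_hk) auto
  ultimately obtain j where j: "j \<in> {1..n}" "hk R j = s" by auto
  then have "y j \<in> max_ideal R" "y j \<noteq> 0" "subdegree (y j) = s" "y j \<in> S"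
    using HK_gens_mem_max_ideal[OF curve gens] gens gens_in unfolding HK_gens_def by auto
  moreover have "y j - y j \<in> ideal_sq (max_ideal R)"
    using ideal_sq_zero by simp
  ultimately show ?thesis by blast
qed

lemma max_ideal_mod_ideal_sq:
  assumes "f \<in> max_ideal R"
  shows "\<exists>g\<in>S. f - g \<in> ideal_sq (max_ideal R)"
proof -
  let ?m = "max_ideal R"
  have ks: "k_subalg R" and cne: "conductor_exps R \<noteq> {}"
    using curve unfolding curve_ring_def by auto
  define P where "P s \<longleftrightarrow> (\<forall>f\<in>?m. (\<forall>j<s. f $ j = 0) \<longrightarrow> (\<exists>g\<in>S. f - g \<in> ideal_sq ?m))" for s
  have "P (2 * Suc (cond_deg R))"
    unfolding P_def
  proof (intro ballI impI)
    fix q :: "'a fps" assume "\<forall>j<2 * Suc (cond_deg R). q $ j = 0"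
    then have "q - 0 \<in> ideal_sq ?m" using mem_ideal_sq_if_vanishes_below[OF cne] by simp
    then show "\<exists>g\<in>S. q - g \<in> ideal_sq ?m" using k_subalg_zero[OF subalg] by blast
  qed
  moreover have "P s" if IH: "P (Suc s)" for s
    unfolding P_def
  proof (intro ballI impI)
    fix q :: "'a fps" assume q: "q \<in> ?m" "\<forall>j<s. q $ j = 0"
    show "\<exists>g\<in>S. q - g \<in> ideal_sq ?m"
    proof (cases "q $ s = 0")
      case True
      then have "\<forall>j<Suc s. q $ j = 0" using q(2) less_Suc_eq by auto
      then show ?thesis using IH q(1) unfolding P_def by blast
    next
      case False
      then have "subdegree q = s" using q(2) by (intro subdegreeI) auto
      then have "s \<in> vals ?m"
        using q(1) False unfolding vals_def by (intro image_eqI[of _ _ q]) auto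
      then obtain h gh where h: "h \<in> ?m" "h \<noteq> 0" "subdegree h = s"
        and gh: "gh \<in> S" "h - gh \<in> ideal_sq ?m"
        using exists_mod_ideal_sq_of_val by blast
      define e where "e = q $ s / h $ s"
      have "q - fps_const e * h \<in> ?m"
        using q(1) h(1) by (intro max_ideal_diff max_ideal_smult ks)
      moreover have "\<forall>j<Suc s. (q - fps_const e * h) $ j = 0"
        unfolding e_def using cancel_leading_coeff q(2) h(2,3) by blast
      ultimately obtain g where g: "g \<in> S" "q - fps_const e * h - g \<in> ideal_sq ?m"
        using IH unfolding P_def by blast
      have "q - (g + fps_const e * gh) = (q - fps_const e * h - g) + fps_const e * (h - gh)"
        by (simp add: algebra_simps)
      also have "\<dots> \<in> ideal_sq ?m"
        using g(2) gh(2) by (intro ideal_sq_add ideal_sq_smult max_ideal_smult ks)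
      finally show ?thesis
        using g(1) gh(1) by (intro bexI[of _ "g + fps_const e * gh"] k_subalg_add k_subalg_smult subalg)
    qed
  qed
  ultimately have "P 0"
    using inc_induct[of 0 "2 * Suc (cond_deg R)" P] by blast
  then show ?thesis using assms unfolding P_def by simp
qed

lemma max_ideal_approx: "\<forall>f\<in>max_ideal R. \<exists>g\<in>S. \<forall>j<Suc N. (f - g) $ j = 0"
proof (induction N)
  case 0
  show ?case using k_subalg_zero[OF subalg] by (auto simp: max_ideal_def intro!: bexI[of _ 0])
next
  case (Suc N)
  show ?case
  proof
    fix f assume "f \<in> max_ideal R"
    then obtain g where g: "g \<in> S" "f - g \<in> ideal_sq (max_ideal R)"
      using max_ideal_mod_ideal_sq by blast
    moreover obtain g' where "g' \<in> S" "\<forall>j<Suc (Suc N). (f - g - g') $ j = 0"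
      using ideal_sq_approx[OF subalg _ Suc.IH g(2)] by (auto simp: max_ideal_def)
    ultimately show "\<exists>g\<in>S. \<forall>j<Suc (Suc N). (f - g) $ j = 0"
      by (metis diff_diff_eq k_subalg_add subalg)
  qed
qed

end

lemma HK_gens_generate:
  assumes curve: "curve_ring R" and gens: "HK_gens R n y"
  shows "R = gen_alg (y ` {1..n})"
proof
  let ?S = "gen_alg (y ` {1..n})"
  have ks: "k_subalg R" and closed: "tadic_closed R"
    using curve unfolding curve_ring_def by auto
  show "?S \<subseteq> R"
    using gens unfolding HK_gens_def by (intro gen_alg_least ks closed) auto
  show "R \<subseteq> ?S"
  proof
    fix f assume f: "f \<in> R"
    define c where "c = fps_const (f $ 0)"
    have "f - c \<in> max_ideal R"
      using f k_subalg_diff[OF ks f k_subalg_const[OF ks]] unfolding max_ideal_def c_def by simp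
    have "\<exists>g\<in>?S. \<forall>j<N. f $ j = g $ j" for N
    proof -
      obtain g where g: "g \<in> ?S" "\<forall>j<Suc N. (f - c - g) $ j = 0"
        using max_ideal_approx[OF curve gens gen_alg_k_subalg] gen_alg_superset
          \<open>f - c \<in> max_ideal R\<close> by blast
      have "c + g \<in> ?S"
        unfolding c_def by (intro k_subalg_add k_subalg_const g(1) gen_alg_k_subalg)
      moreover have "\<forall>j<N. f $ j = (c + g) $ j"
        using g(2) by (simp add: algebra_simps)
      ultimately show ?thesis by blast
    qed
    then show "f \<in> ?S"
      using gen_alg_tadic_closed unfolding tadic_closed_def by blast
  qed
qed

lemma fps_X_power_mem:
  fixes R :: "'a::field fps set"
  assumes ks: "k_subalg R" and cne: "conductor_exps R \<noteq> {}"
    and mem: "\<alpha> * fps_X ^ a \<in> R" and ord: "enat (cond_deg R) \<le> ordm1 \<alpha> + enat a"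
  shows "fps_X ^ a \<in> R"
proof -
  have "((\<alpha> - 1) * fps_X ^ a) $ j = 0" if j: "j < cond_deg R" for j
  proof (cases "\<alpha> = 1 \<or> j < a")
    case False
    then have "ordm1 \<alpha> = enat (subdegree (\<alpha> - 1))"
      by (simp add: ordm1_def)
    then have "cond_deg R \<le> subdegree (\<alpha> - 1) + a"
      using ord by simp
    then have "j - a < subdegree (\<alpha> - 1)"
      using j False by linarith
    then have "(\<alpha> - 1) $ (j - a) = 0"
      by (rule nth_less_subdegree_zero)
    then show ?thesis using False by (simp add: fps_X_power_mult_right_nth)
  qed (auto simp: fps_X_power_mult_right_nth)
  then have "(\<alpha> - 1) * fps_X ^ a \<in> R"
    using mem_if_vanishes_below_cond_deg[OF cne] by blast
  then have "\<alpha> * fps_X ^ a - (\<alpha> - 1) * fps_X ^ a \<in> R"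
    using k_subalg_diff[OF ks mem] by blast
  then show ?thesis by (simp add: algebra_simps)
qed

lemma HK_gens_fun_upd:
  assumes "HK_gens R n y" "z \<in> R" "z \<noteq> 0" "subdegree z = hk R i"
  shows "HK_gens R n (y(i := z))"
  using assms unfolding HK_gens_def by auto

theorem mainTheorem9:
  fixes R :: "'a::field_char_0 fps set" and x \<alpha> :: "nat \<Rightarrow> 'a fps" and n i d :: nat
  assumes "alg_closed_field TYPE('a)"
    and "curve_ring R"
    and "HK_gens R n x"
    and "x 1 = fps_X ^ hk R 1"
    and "\<forall>j\<in>{2..n}. \<alpha> j $ 0 = 1 \<and> x j = \<alpha> j * fps_X ^ hk R j"
    and "2 \<le> i" "i \<le> n" "2 \<le> d" "d \<le> n"
    and "ordm1 (\<alpha> d) + enat (hk R i) \<ge> enat (cond_deg R)"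
    and "ordm1 (\<alpha> d) < \<infinity>"
    and "ordm1 (\<alpha> d) \<le> ordm1 (\<alpha> i)"
  shows "R = gen_alg ((x(i := fps_X ^ hk R i)) ` {1..n})
       \<and> HK_gens R n (x(i := fps_X ^ hk R i))"
proof -
  have ks: "k_subalg R" and cne: "conductor_exps R \<noteq> {}"
    using \<open>curve_ring R\<close> unfolding curve_ring_def by auto
  have "x i = \<alpha> i * fps_X ^ hk R i"
    using assms(5-7) by auto
  moreover have "x i \<in> R"
    using assms(3,6,7) unfolding HK_gens_def by auto
  moreover have "enat (cond_deg R) \<le> ordm1 (\<alpha> i) + enat (hk R i)"
    using assms(10,12) by (meson add_right_mono order_trans)
  ultimately have "fps_X ^ hk R i \<in> R"
    using fps_X_power_mem[OF ks cne] by metis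
  then have "HK_gens R n (x(i := fps_X ^ hk R i))"
    using \<open>HK_gens R n x\<close> by (intro HK_gens_fun_upd) (simp_all add: fps_X_power_subdegree)
  then show ?thesis
    using HK_gens_generate[OF \<open>curve_ring R\<close>] by blast
qed

end
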